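(* Consider linear implicit models $Ex_{t+1}=Fx_t+Ku_t$ with $E,F\in\mathbb{R}^{n\times n}$, $K\in\mathbb{R}^{n\times m}$. (i) If there exist $\epsilon>0$ and $\alpha\in(0,1)$ such that $E+E^\top\succ\epsilon I$, $E\in\mathbb{M}^n$, $F\ge0$, $K\ge0$ and $\mathbf{1}^\top(\alpha E-F)\ge0$, then $E$ is invertible and the explicit system $x_{t+1}=Ax_t+Bu_t$ with $A=E^{-1}F$, $B=E^{-1}K$ is a positive linear system with $A$ Schur stable (all eigenvalues of modulus $<1$). (ii) Conversely, for every $A\in\mathbb{R}^{n\times n}$ with $A\ge0$ Schur stable and every $B\in\mathbb{R}^{n\times m}$ with $B\ge0$, there exist $E$ (which can be taken diagonal with positive diagonal), $F$, $K$, $\epsilon>0$ and $\alpha\in(0,1)$ satisfying all conditions in (i) with $E^{-1}F=A$ and $E^{-1}K=B$. Hence these conditions parametrize exactly all stable discrete-time positive linear systems.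
   Context: Inequalities between vectors/matrices are elementwise; $\mathbf{1}$ is the all-ones column vector; $M\succ0$ means positive definite. $\mathbb{M}^n$ is the set of $n\times n$ nonsingular M-matrices: real matrices with off-diagonal entries $\le0$ and all eigenvalues having positive real part. A discrete-time linear system $x_{t+1}=Ax_t+Bu_t$ is positive if $x_0\ge0$ and $u_t\ge0$ for all $t$ imply $x_t\ge0$ for all $t$ (equivalently $A\ge0$, $B\ge0$). *)

theory Defs
  imports "HOL-Analysis.Analysis"
begin

definition cmat :: "real^'n^'n \<Rightarrow> complex^'n^'n" where
  "cmat A = (\<chi> i j. complex_of_real (A $ i $ j))"

definition is_eigenvalue :: "real^'n^'n \<Rightarrow> complex \<Rightarrow> bool" where
  "is_eigenvalue A lam \<longleftrightarrow> (\<exists>v::complex^'n. v \<noteq> 0 \<and> cmat A *v v = lam *s v)"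

definition schur_stable :: "real^'n^'n \<Rightarrow> bool" where
  "schur_stable A \<longleftrightarrow> (\<forall>lam. is_eigenvalue A lam \<longrightarrow> cmod lam < 1)"

definition M_matrix :: "real^'n^'n \<Rightarrow> bool" where
  "M_matrix E \<longleftrightarrow> (\<forall>i j. i \<noteq> j \<longrightarrow> E $ i $ j \<le> 0) \<and>
                   (\<forall>lam. is_eigenvalue E lam \<longrightarrow> Re lam > 0)"

definition pos_def :: "real^'n^'n \<Rightarrow> bool" where
  "pos_def M \<longleftrightarrow> (\<forall>x. x \<noteq> 0 \<longrightarrow> x \<bullet> (M *v x) > 0)"

definition nonneg_mat :: "real^'m^'n \<Rightarrow> bool" where
  "nonneg_mat A \<longleftrightarrow> (\<forall>i j. 0 \<le> A $ i $ j)"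

definition nonneg_vec :: "real^'n \<Rightarrow> bool" where
  "nonneg_vec x \<longleftrightarrow> (\<forall>i. 0 \<le> x $ i)"

fun traj :: "real^'n^'n \<Rightarrow> real^'m^'n \<Rightarrow> real^'n \<Rightarrow> (nat \<Rightarrow> real^'m) \<Rightarrow> nat \<Rightarrow> real^'n" where
  "traj A B x0 u 0 = x0"
| "traj A B x0 u (Suc t) = A *v traj A B x0 u t + B *v u t"

definition positive_system :: "real^'n^'n \<Rightarrow> real^'m^'n \<Rightarrow> bool" where
  "positive_system A B \<longleftrightarrow>
     (\<forall>x0 u. nonneg_vec x0 \<and> (\<forall>t. nonneg_vec (u t)) \<longrightarrow> (\<forall>t. nonneg_vec (traj A B x0 u t)))"

definition implicit_conds :: "real^'n^'n \<Rightarrow> real^'n^'n \<Rightarrow> real^'m^'n \<Rightarrow> real \<Rightarrow> real \<Rightarrow> bool" where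
  "implicit_conds E F K eps alpha \<longleftrightarrow>
     eps > 0 \<and> 0 < alpha \<and> alpha < 1 \<and>
     pos_def (E + transpose E - eps *\<^sub>R mat 1) \<and>
     M_matrix E \<and> nonneg_mat F \<and> nonneg_mat K \<and>
     (\<forall>j. 0 \<le> (\<Sum>i\<in>UNIV. alpha * E $ i $ j - F $ i $ j))"

end

(* Part (i): positive definiteness of the symmetric part makes x . E x positive, and for a
   Z-matrix this forces E to be monotone (E x >= 0 implies x >= 0).  Hence E is invertible with
   E^-1 >= 0, so A = E^-1 F and B = E^-1 K are nonnegative.  The column sums w = 1^T E form a
   linear copositive Lyapunov function: w A = 1^T F <= alpha w, and for an eigenpair (lambda, v)
   of A this gives |lambda| (w . |v|) <= alpha (w . |v|).

   Part (ii): Schur stability gives |A^k| <= c beta^k with beta < 1 (via the Jordan normal form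
   of the complexification), so the column sums of A^N drop below alpha^N for some alpha < 1
   and N > 0.  The truncated series d = sum_{k<N} alpha^-k 1^T A^k then satisfies d >= 1 and
   d A <= alpha d, and E = diag d, F = E A, K = E B, eps = 1 meet all conditions. *)

theory Submission
  imports Defs "Jordan_Normal_Form.Spectral_Radius"
begin

no_notation vec_index (infixl "$" 100)

section \<open>Finite-type indexed matrices as Jordan normal form matrices\<close>

definition enum_index :: "nat \<Rightarrow> 'n::finite" where
  "enum_index = (SOME g. bij_betw g {0..<CARD('n)} UNIV)"

lemma bij_betw_enum_index: "bij_betw (enum_index :: nat \<Rightarrow> 'n::finite) {0..<CARD('n)} UNIV"
  unfolding enum_index_def
  using someI_ex[OF ex_bij_betw_nat_finite[of "UNIV :: 'n set"]] by simp

definition index_of :: "'n::finite \<Rightarrow> nat" where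
  "index_of = the_inv_into {0..<CARD('n)} enum_index"

lemma index_of_less: "index_of (x :: 'n::finite) < CARD('n)"
  using bij_betw_the_inv_into[OF bij_betw_enum_index[where 'n = 'n]]
  unfolding index_of_def bij_betw_def by auto

lemma enum_index_of [simp]: "enum_index (index_of x) = (x :: 'n::finite)"
  using f_the_inv_into_f_bij_betw[OF bij_betw_enum_index[where 'n = 'n]]
  unfolding index_of_def by simp

lemma index_of_enum [simp]: "i < CARD('n::finite) \<Longrightarrow> index_of (enum_index i :: 'n) = i"
  using the_inv_into_f_f[OF bij_betw_imp_inj_on[OF bij_betw_enum_index[where 'n = 'n]]]
  unfolding index_of_def by simp

lemma sum_UNIV_enum_index:
  "(\<Sum>x\<in>UNIV. f x) = (\<Sum>i\<in>{0..<CARD('n::finite)}. f (enum_index i :: 'n))"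
  using sum.reindex_bij_betw[OF bij_betw_enum_index, of f] by simp

definition to_vec :: "'a^'n \<Rightarrow> 'a vec" where
  "to_vec v = Matrix.vec CARD('n) (\<lambda>i. v $ enum_index i)"

definition of_vec :: "'a vec \<Rightarrow> 'a^'n" where
  "of_vec u = (\<chi> x. vec_index u (index_of x))"

definition to_mat :: "'a^'n^'n \<Rightarrow> 'a mat" where
  "to_mat M = Matrix.mat CARD('n) CARD('n) (\<lambda>(i, j). M $ enum_index i $ enum_index j)"

lemma to_vec_carrier: "to_vec (v :: 'a^'n) \<in> carrier_vec CARD('n)"
  by (simp add: to_vec_def)

lemma to_mat_carrier: "to_mat (M :: 'a^'n^'n) \<in> carrier_mat CARD('n) CARD('n)"
  by (simp add: to_mat_def)

lemma dim_to_mat [simp]: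
  "dim_row (to_mat (M :: 'a^'n^'n)) = CARD('n)" "dim_col (to_mat (M :: 'a^'n^'n)) = CARD('n)"
  by (simp_all add: to_mat_def)

lemma index_to_mat [simp]:
  "i < CARD('n) \<Longrightarrow> j < CARD('n) \<Longrightarrow> to_mat (M :: 'a^'n^'n) $$ (i, j) = M $ enum_index i $ enum_index j"
  by (simp add: to_mat_def)

lemma to_vec_of_vec:
  assumes "u \<in> carrier_vec CARD('n)"
  shows "to_vec (of_vec u :: 'a^'n) = u"
  using assms by (auto simp: to_vec_def of_vec_def)

lemma to_vec_inject: "to_vec (v :: 'a^'n) = to_vec w \<longleftrightarrow> v = w"
proof
  assume "to_vec v = to_vec w"
  then have "v $ enum_index (index_of x) = w $ enum_index (index_of x)" for x :: 'n
    using index_of_less[of x] by (metis index_vec to_vec_def)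
  then show "v = w" by (simp add: Finite_Cartesian_Product.vec_eq_iff)
qed simp

lemma to_vec_zero [simp]: "to_vec (0 :: 'a::zero^'n) = 0\<^sub>v CARD('n)"
  by (auto simp: to_vec_def)

lemma to_vec_smult: "to_vec (c *s v) = c \<cdot>\<^sub>v to_vec v"
  by (auto simp: to_vec_def)

lemma to_mat_mult_vec:
  "to_mat (M :: 'a::comm_semiring_1^'n^'n) *\<^sub>v to_vec v = to_vec (M *v v)"
  by (auto simp: to_mat_def to_vec_def scalar_prod_def matrix_vector_mult_def sum_UNIV_enum_index)

lemma to_mat_mult:
  "to_mat ((M :: 'a::comm_semiring_1^'n^'n) ** N) = to_mat M * to_mat N"
  by (rule eq_matI)
     (simp_all add: scalar_prod_def matrix_matrix_mult_def sum_UNIV_enum_index row_def col_def)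

lemma to_mat_one: "to_mat (Finite_Cartesian_Product.mat 1 :: 'a::semiring_1^'n^'n) = 1\<^sub>m CARD('n)"
  by (rule eq_matI) (auto simp: Finite_Cartesian_Product.mat_def dest: index_of_enum)

lemma eigenvalue_to_mat_iff:
  "eigenvalue (to_mat (M :: 'a::comm_ring_1^'n^'n)) ev \<longleftrightarrow> (\<exists>v. v \<noteq> 0 \<and> M *v v = ev *s v)"
proof
  assume "eigenvalue (to_mat M) ev"
  then obtain u where u: "u \<in> carrier_vec CARD('n)" "u \<noteq> 0\<^sub>v CARD('n)" "to_mat M *\<^sub>v u = ev \<cdot>\<^sub>v u"
    unfolding eigenvalue_def eigenvector_def by (auto simp: to_mat_def)
  define v :: "'a^'n" where "v = of_vec u"
  have "to_vec (M *v v) = to_vec (ev *s v)"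
    using u by (simp add: to_mat_mult_vec[symmetric] to_vec_smult v_def to_vec_of_vec)
  then have "M *v v = ev *s v" by (simp only: to_vec_inject)
  moreover have "v \<noteq> 0"
    using u to_vec_inject[of v 0] by (auto simp: v_def to_vec_of_vec)
  ultimately show "\<exists>v. v \<noteq> 0 \<and> M *v v = ev *s v" by blast
next
  assume "\<exists>v. v \<noteq> 0 \<and> M *v v = ev *s v"
  then obtain v where "v \<noteq> 0" "M *v v = ev *s v" by blast
  then show "eigenvalue (to_mat M) ev"
    unfolding eigenvalue_def eigenvector_def
    by (intro exI[of _ "to_vec v"])
       (auto simp: to_mat_mult_vec to_vec_smult to_vec_inject[of v 0, simplified] to_vec_carrier)
qed

fun matpow :: "'a::semiring_1^'n^'n \<Rightarrow> nat \<Rightarrow> 'a^'n^'n" where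
  "matpow A 0 = Finite_Cartesian_Product.mat 1"
| "matpow A (Suc k) = matpow A k ** A"

lemma to_mat_matpow: "to_mat (matpow (M :: 'a::comm_semiring_1^'n^'n) k) = to_mat M ^\<^sub>m k"
  by (induction k) (simp_all add: to_mat_one to_mat_mult)

lemma matpow_scaleR: "matpow (c *\<^sub>R A) k = c ^ k *\<^sub>R matpow (A :: real^'n^'n) k"
  by (induction k) (simp_all add: matrix_scalar_ac scalar_matrix_assoc[symmetric])

lemma cmat_index [simp]: "cmat A $ i $ j = complex_of_real (A $ i $ j)"
  by (simp add: cmat_def)

lemma cmat_mult: "cmat (A ** B) = cmat A ** cmat B"
  by (simp add: cmat_def matrix_matrix_mult_def Finite_Cartesian_Product.vec_eq_iff)

lemma cmat_one: "cmat (Finite_Cartesian_Product.mat 1) = Finite_Cartesian_Product.mat 1"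
  by (simp add: cmat_def Finite_Cartesian_Product.mat_def Finite_Cartesian_Product.vec_eq_iff)

lemma cmat_matpow: "cmat (matpow A k) = matpow (cmat A) k"
  by (induction k) (simp_all add: cmat_mult cmat_one)

lemma is_eigenvalue_iff_eigenvalue_to_mat: "is_eigenvalue A ev \<longleftrightarrow> eigenvalue (to_mat (cmat A)) ev"
  by (simp add: is_eigenvalue_def eigenvalue_to_mat_iff)

lemma is_eigenvalue_scaleR:
  assumes "is_eigenvalue A ev"
  shows "is_eigenvalue (c *\<^sub>R A) (complex_of_real c * ev)"
proof -
  obtain v where "v \<noteq> 0" "cmat A *v v = ev *s v"
    using assms unfolding is_eigenvalue_def by blast
  moreover have "cmat (c *\<^sub>R A) *v v = complex_of_real c *s (cmat A *v v)"
    by (simp add: cmat_def matrix_vector_mult_def sum_distrib_left mult.assoc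
        Finite_Cartesian_Product.vec_eq_iff)
  ultimately show ?thesis
    unfolding is_eigenvalue_def by (metis vector_smult_assoc)
qed

section \<open>Spectral radius and decay of powers\<close>

definition spectral_radius_real :: "real^'n^'n \<Rightarrow> real" where
  "spectral_radius_real A = spectral_radius (to_mat (cmat A))"

lemma spectral_radius_real_attained:
  obtains ev where "is_eigenvalue A ev" "cmod ev = spectral_radius_real A"
  using spectral_radius_mem_max(1)[OF to_mat_carrier[of "cmat A"] zero_less_card_finite]
  by (auto simp: spectral_radius_real_def spectrum_def is_eigenvalue_iff_eigenvalue_to_mat)

lemma norm_le_spectral_radius_real: "is_eigenvalue A ev \<Longrightarrow> cmod ev \<le> spectral_radius_real A"
  using spectral_radius_mem_max(2)[OF to_mat_carrier[of "cmat A"] zero_less_card_finite]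
  by (auto simp: spectral_radius_real_def spectrum_def is_eigenvalue_iff_eigenvalue_to_mat)

lemma spectral_radius_real_nonneg: "0 \<le> spectral_radius_real A"
  by (metis norm_ge_zero spectral_radius_real_attained)

lemma schur_stable_iff_spectral_radius_real: "schur_stable A \<longleftrightarrow> spectral_radius_real A < 1"
  by (metis schur_stable_def spectral_radius_real_attained norm_le_spectral_radius_real
      order.strict_trans1)

lemma spectral_radius_real_scaleR:
  assumes "0 < c"
  shows "spectral_radius_real (c *\<^sub>R A) = c * spectral_radius_real A"
proof (rule antisym)
  obtain ev where ev: "is_eigenvalue (c *\<^sub>R A) ev" "cmod ev = spectral_radius_real (c *\<^sub>R A)"
    by (rule spectral_radius_real_attained)
  have "is_eigenvalue A (complex_of_real (1 / c) * ev)"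
    using is_eigenvalue_scaleR[OF ev(1), of "1 / c"] assms by simp
  from norm_le_spectral_radius_real[OF this]
  have "cmod ev / c \<le> spectral_radius_real A"
    using assms by (simp add: norm_divide)
  then show "spectral_radius_real (c *\<^sub>R A) \<le> c * spectral_radius_real A"
    using ev(2) assms by (simp add: field_simps)
next
  obtain ev where ev: "is_eigenvalue A ev" "cmod ev = spectral_radius_real A"
    by (rule spectral_radius_real_attained)
  have "cmod (complex_of_real c * ev) \<le> spectral_radius_real (c *\<^sub>R A)"
    by (rule norm_le_spectral_radius_real[OF is_eigenvalue_scaleR[OF ev(1)]])
  then show "c * spectral_radius_real A \<le> spectral_radius_real (c *\<^sub>R A)"
    using ev(2) assms by (simp add: norm_mult)
qed

lemma matpow_bounded_if_spectral_radius_real_less_1: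
  fixes A :: "real^'n^'n"
  assumes "spectral_radius_real A < 1"
  obtains c where "\<And>k i j. \<bar>matpow A k $ i $ j\<bar> \<le> c"
proof -
  obtain c where c: "\<And>k. norm_bound (to_mat (cmat A) ^\<^sub>m k) c"
    using spectral_radius_jnf_norm_bound_less_1_upper_triangular[OF to_mat_carrier] assms
    unfolding spectral_radius_real_def by blast
  have "\<bar>matpow A k $ i $ j\<bar> \<le> c" for k i j
  proof -
    have "(to_mat (cmat A) ^\<^sub>m k) $$ (index_of i, index_of j) = complex_of_real (matpow A k $ i $ j)"
      by (simp add: to_mat_matpow[symmetric] cmat_matpow[symmetric] index_of_less)
    moreover have "dim_row (to_mat (cmat A) ^\<^sub>m k) = CARD('n)" "dim_col (to_mat (cmat A) ^\<^sub>m k) = CARD('n)"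
      by simp_all
    ultimately show ?thesis
      using c[of k] index_of_less[of i] index_of_less[of j] unfolding norm_bound_def
      by (metis norm_of_real)
  qed
  then show ?thesis by (rule that)
qed

lemma schur_stable_imp_matpow_decay:
  assumes "schur_stable A"
  obtains \<beta> c where "0 < \<beta>" "\<beta> < 1" "\<And>k i j. \<bar>matpow A k $ i $ j\<bar> \<le> c * \<beta> ^ k"
proof -
  define \<beta> where "\<beta> = (1 + spectral_radius_real A) / 2"
  have \<beta>: "0 < \<beta>" "\<beta> < 1" "spectral_radius_real A < \<beta>"
    using assms spectral_radius_real_nonneg[of A]
    by (auto simp: \<beta>_def schur_stable_iff_spectral_radius_real)
  have "spectral_radius_real ((1 / \<beta>) *\<^sub>R A) < 1"
    using \<beta> by (simp add: spectral_radius_real_scaleR field_simps)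
  then obtain c where c: "\<And>k i j. \<bar>matpow ((1 / \<beta>) *\<^sub>R A) k $ i $ j\<bar> \<le> c"
    using matpow_bounded_if_spectral_radius_real_less_1 by blast
  have "\<bar>matpow A k $ i $ j\<bar> \<le> c * \<beta> ^ k" for k i j
    using c[of k i j] \<beta> by (simp add: matpow_scaleR abs_mult field_simps)
  with \<beta> show ?thesis by (intro that)
qed

section \<open>Nonnegativity and copositive Lyapunov functions\<close>

definition Z_matrix :: "real^'n^'n \<Rightarrow> bool" where
  "Z_matrix E \<longleftrightarrow> (\<forall>i j. i \<noteq> j \<longrightarrow> E $ i $ j \<le> 0)"

lemma one_vector_matrix_mult_index: "(1 v* M) $ j = (\<Sum>i\<in>UNIV. M $ i $ j)"
  by (simp add: vector_matrix_mult_def)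

lemma nonneg_mat_mult: "nonneg_mat A \<Longrightarrow> nonneg_mat B \<Longrightarrow> nonneg_mat (A ** B)"
  unfolding nonneg_mat_def by (simp add: matrix_matrix_mult_def sum_nonneg)

lemma nonneg_vec_mult: "nonneg_mat A \<Longrightarrow> nonneg_vec x \<Longrightarrow> nonneg_vec (A *v x)"
  unfolding nonneg_mat_def nonneg_vec_def by (simp add: matrix_vector_mult_def sum_nonneg)

lemma nonneg_matpow: "nonneg_mat A \<Longrightarrow> nonneg_mat (matpow A k)"
  by (induction k)
     (auto simp: nonneg_mat_mult, simp add: nonneg_mat_def Finite_Cartesian_Product.mat_def)

lemma positive_system_if_nonneg:
  fixes A :: "real^'n^'n" and B :: "real^'m^'n"
  assumes "nonneg_mat A" "nonneg_mat B"
  shows "positive_system A B"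
  unfolding positive_system_def
proof (intro allI impI)
  fix x0 :: "real^'n" and u :: "nat \<Rightarrow> real^'m" and t
  assume "nonneg_vec x0 \<and> (\<forall>t. nonneg_vec (u t))"
  then show "nonneg_vec (traj A B x0 u t)"
    by (induction t) (auto simp: nonneg_vec_def assms[THEN nonneg_vec_mult, unfolded nonneg_vec_def])
qed

lemma inner_vector_matrix_mult_self: "x \<bullet> (x v* E) = x \<bullet> (E *v (x :: real^'n))"
  by (metis dot_lmul_matrix inner_commute)

lemma quadratic_form_pos_if_pos_def_symmetric_part:
  fixes E :: "real^'n^'n"
  assumes "pos_def (E + transpose E - eps *\<^sub>R Finite_Cartesian_Product.mat 1)" "0 \<le> eps" "x \<noteq> 0"
  shows "0 < x \<bullet> (E *v x)"
proof -
  have "0 < x \<bullet> ((E + transpose E - eps *\<^sub>R Finite_Cartesian_Product.mat 1) *v x)"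
    using assms(1,3) unfolding pos_def_def by blast
  also have "\<dots> = 2 * (x \<bullet> (E *v x)) - eps * (x \<bullet> x)"
    by (simp add: algebra_simps inner_diff_right inner_add_right inner_vector_matrix_mult_self
        scaleR_matrix_vector_assoc[symmetric])
  finally show ?thesis
    using assms(2) by (smt (verit) inner_ge_zero mult_nonneg_nonneg)
qed

lemma invertible_if_quadratic_form_pos:
  fixes E :: "real^'n^'n"
  assumes "\<And>x. x \<noteq> 0 \<Longrightarrow> 0 < x \<bullet> (E *v x)"
  shows "invertible E"
proof -
  have "\<forall>x. E *v x = 0 \<longrightarrow> x = 0"
    using assms by force
  then show ?thesis
    using matrix_left_invertible_ker invertible_left_inverse by blast
qed

text \<open>Test against the negative part \<open>y = min x 0\<close>: the Z-sign pattern gives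
  \<open>y \<bullet> (E *v (x - y)) \<ge> 0\<close>, hence \<open>y \<bullet> (E *v y) \<le> y \<bullet> (E *v x) \<le> 0\<close> and \<open>y = 0\<close>.\<close>

lemma Z_matrix_monotone:
  fixes E :: "real^'n^'n"
  assumes Z: "Z_matrix E" and pos: "\<And>x. x \<noteq> 0 \<Longrightarrow> 0 < x \<bullet> (E *v x)"
    and Ex: "nonneg_vec (E *v x)"
  shows "nonneg_vec x"
proof -
  define y :: "real^'n" where "y = (\<chi> i. min (x $ i) 0)"
  have "y \<bullet> (E *v x) = (\<Sum>i\<in>UNIV. y $ i * (E *v x) $ i)"
    by (simp add: inner_vec_def)
  also have "\<dots> \<le> 0"
    using Ex by (intro sum_nonpos) (auto simp: y_def nonneg_vec_def intro!: mult_nonpos_nonneg)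
  finally have yEx: "y \<bullet> (E *v x) \<le> 0" .
  have "0 \<le> (\<Sum>i\<in>UNIV. \<Sum>j\<in>UNIV. y $ i * (E $ i $ j * (x $ j - y $ j)))"
  proof (intro sum_nonneg)
    fix i j
    show "0 \<le> y $ i * (E $ i $ j * (x $ j - y $ j))"
    proof (cases "i = j")
      case True
      then show ?thesis by (cases "x $ i \<le> 0") (auto simp: y_def)
    next
      case False
      then have "y $ i \<le> 0" "E $ i $ j \<le> 0" "0 \<le> x $ j - y $ j"
        using Z by (auto simp: y_def Z_matrix_def)
      then show ?thesis by (simp add: mult_nonpos_nonpos mult_nonpos_nonneg)
    qed
  qed
  also have "\<dots> = y \<bullet> (E *v x) - y \<bullet> (E *v y)"
    by (simp add: inner_vec_def matrix_vector_mult_def sum_distrib_left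
        sum_subtractf algebra_simps)
  finally have "y \<bullet> (E *v y) \<le> 0" using yEx by linarith
  then have "y = 0" using pos by force
  then show ?thesis
    by (simp add: nonneg_vec_def y_def Finite_Cartesian_Product.vec_eq_iff) (metis min.cobounded1)
qed

lemma matrix_inv_left_right:
  fixes A :: "'a::semiring_1^'n^'n"
  assumes "invertible A"
  shows "A ** matrix_inv A = Finite_Cartesian_Product.mat 1" "matrix_inv A ** A = Finite_Cartesian_Product.mat 1"
  using someI_ex[OF assms[unfolded invertible_def]] unfolding matrix_inv_def by auto

lemma nonneg_matrix_inv_if_monotone:
  fixes E :: "real^'n^'n"
  assumes "invertible E" and mono: "\<And>x. nonneg_vec (E *v x) \<Longrightarrow> nonneg_vec x"
  shows "nonneg_mat (matrix_inv E)"
  unfolding nonneg_mat_def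
proof (intro allI)
  fix i j
  have "E *v (matrix_inv E *v axis j 1) = axis j 1"
    by (simp add: matrix_vector_mul_assoc matrix_inv_left_right(1)[OF assms(1)])
  then have "nonneg_vec (E *v (matrix_inv E *v axis j 1))"
    by (simp add: nonneg_vec_def axis_def)
  then have "nonneg_vec (matrix_inv E *v axis j 1)"
    by (rule mono)
  then show "0 \<le> matrix_inv E $ i $ j"
    by (simp add: nonneg_vec_def matrix_vector_mult_basis column_def)
qed

lemma norm_eigenvector_component_le:
  fixes A :: "real^'n^'n"
  assumes "nonneg_mat A" "cmat A *v v = ev *s v"
  shows "cmod ev * cmod (v $ i) \<le> (\<Sum>j\<in>UNIV. A $ i $ j * cmod (v $ j))"
proof -
  have "cmod ev * cmod (v $ i) = cmod (\<Sum>j\<in>UNIV. complex_of_real (A $ i $ j) * v $ j)"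
    using arg_cong[OF assms(2), of "\<lambda>w. w $ i"]
    by (simp add: matrix_vector_mult_def norm_mult)
  also have "\<dots> \<le> (\<Sum>j\<in>UNIV. A $ i $ j * cmod (v $ j))"
    using norm_sum[of "\<lambda>j. complex_of_real (A $ i $ j) * v $ j" UNIV] assms(1)
    by (simp add: norm_mult nonneg_mat_def)
  finally show ?thesis .
qed

lemma schur_stable_if_copositive_lyapunov:
  fixes A :: "real^'n^'n" and w :: "real^'n"
  assumes A: "nonneg_mat A" and w: "nonneg_vec w" and \<alpha>: "\<alpha> < 1"
    and lyap: "\<And>j. (w v* A) $ j \<le> \<alpha> * w $ j"
    and support: "\<And>i j. w $ j = 0 \<Longrightarrow> A $ i $ j = 0"
  shows "schur_stable A"
  unfolding schur_stable_def
proof (intro allI impI)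
  fix ev
  assume "is_eigenvalue A ev"
  then obtain v where v: "v \<noteq> 0" "cmat A *v v = ev *s v"
    unfolding is_eigenvalue_def by blast
  define S where "S = (\<Sum>j\<in>UNIV. w $ j * cmod (v $ j))"
  have "cmod ev * S = (\<Sum>i\<in>UNIV. w $ i * (cmod ev * cmod (v $ i)))"
    by (simp add: S_def sum_distrib_left mult_ac)
  also have "\<dots> \<le> (\<Sum>i\<in>UNIV. w $ i * (\<Sum>j\<in>UNIV. A $ i $ j * cmod (v $ j)))"
    using w norm_eigenvector_component_le[OF A v(2)]
    by (intro sum_mono mult_left_mono) (auto simp: nonneg_vec_def)
  also have "\<dots> = (\<Sum>j\<in>UNIV. (w v* A) $ j * cmod (v $ j))"
    by (simp add: vector_matrix_mult_def sum_distrib_left sum_distrib_right mult_ac)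
       (rule sum.swap)
  also have "\<dots> \<le> (\<Sum>j\<in>UNIV. \<alpha> * w $ j * cmod (v $ j))"
    using lyap by (intro sum_mono mult_right_mono) auto
  also have "\<dots> = \<alpha> * S"
    by (simp add: S_def sum_distrib_left mult_ac)
  finally have evS: "cmod ev * S \<le> \<alpha> * S" .
  show "cmod ev < 1"
  proof (cases "S = 0")
    case False
    then have "0 < S"
      using w by (simp add: S_def nonneg_vec_def sum_nonneg order.not_eq_order_implies_strict)
    with evS \<alpha> show ?thesis by simp
  next
    case True
    then have "w $ j * cmod (v $ j) = 0" for j
      using w sum_nonneg_eq_0_iff[of UNIV "\<lambda>j. w $ j * cmod (v $ j)"]
      by (simp add: S_def nonneg_vec_def)
    then have "A $ i $ j * v $ j = 0" for i j
      using support by fastforce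
    then have "cmat A *v v = 0"
      by (simp add: matrix_vector_mult_def Finite_Cartesian_Product.vec_eq_iff)
    with v have "ev = 0"
      by simp
    then show ?thesis by simp
  qed
qed

lemma schur_stable_matrix_inv_mult:
  fixes E F :: "real^'n^'n"
  assumes inv: "invertible E" and Einv: "nonneg_mat (matrix_inv E)" and F: "nonneg_mat F"
    and alpha: "0 < alpha" "alpha < 1"
    and F_cols: "\<And>j. (1 v* F) $ j \<le> alpha * (1 v* E) $ j"
  shows "schur_stable (matrix_inv E ** F)"
proof -
  define A where "A = matrix_inv E ** F"
  define w where "w = 1 v* E"
  have A: "nonneg_mat A"
    unfolding A_def using Einv F by (rule nonneg_mat_mult)
  have wA: "w v* A = 1 v* F"
    by (simp add: w_def A_def vector_matrix_mul_assoc matrix_mul_assoc matrix_inv_left_right(1)[OF inv])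
  have F_cols_nonneg: "0 \<le> (1 v* F) $ j" for j
    using F by (simp add: one_vector_matrix_mult_index nonneg_mat_def sum_nonneg)
  have w: "nonneg_vec w"
    using F_cols F_cols_nonneg alpha unfolding nonneg_vec_def w_def
    by (meson order_trans zero_le_mult_iff not_le)
  \<comment> \<open>\<open>w\<close> may vanish in some coordinate; there the column of \<open>F\<close>, hence of \<open>A\<close>, is zero.\<close>
  have "A $ i $ j = 0" if "w $ j = 0" for i j
  proof -
    have "(\<Sum>k\<in>UNIV. F $ k $ j) = 0"
      using F_cols[of j] F_cols_nonneg[of j] that by (simp add: w_def one_vector_matrix_mult_index)
    then have "F $ k $ j = 0" for k
      using F sum_nonneg_eq_0_iff[of UNIV "\<lambda>k. F $ k $ j"] by (simp add: nonneg_mat_def)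
    then show ?thesis by (simp add: A_def matrix_matrix_mult_def)
  qed
  then show ?thesis
    using schur_stable_if_copositive_lyapunov[OF A w alpha(2)] wA F_cols
    unfolding A_def w_def by metis
qed

lemma implicit_model_stable_positive:
  fixes E F :: "real^'n^'n" and K :: "real^'m^'n"
  assumes "implicit_conds E F K eps alpha"
  shows "invertible E \<and> positive_system (matrix_inv E ** F) (matrix_inv E ** K) \<and>
         schur_stable (matrix_inv E ** F)"
proof -
  have alpha: "0 < alpha" "alpha < 1" and F: "nonneg_mat F" and K: "nonneg_mat K"
    and M: "M_matrix E"
    and cols: "\<And>j. 0 \<le> (\<Sum>i\<in>UNIV. alpha * E $ i $ j - F $ i $ j)"
    using assms unfolding implicit_conds_def by auto
  have pos: "0 < x \<bullet> (E *v x)" if "x \<noteq> 0" for x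
    using assms that quadratic_form_pos_if_pos_def_symmetric_part
    unfolding implicit_conds_def by fastforce
  have Z: "Z_matrix E"
    using M unfolding M_matrix_def Z_matrix_def by blast
  have inv: "invertible E"
    using pos by (rule invertible_if_quadratic_form_pos)
  have Einv: "nonneg_mat (matrix_inv E)"
    using inv Z_matrix_monotone[OF Z pos] by (rule nonneg_matrix_inv_if_monotone)
  have "(1 v* F) $ j \<le> alpha * (1 v* E) $ j" for j
    using cols[of j] by (simp add: one_vector_matrix_mult_index sum_subtractf sum_distrib_left)
  then have "schur_stable (matrix_inv E ** F)"
    using schur_stable_matrix_inv_mult[OF inv Einv F alpha] by blast
  moreover have "positive_system (matrix_inv E ** F) (matrix_inv E ** K)"
    using Einv F K by (simp add: positive_system_if_nonneg nonneg_mat_mult)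
  ultimately show ?thesis
    using inv by blast
qed

section \<open>Diagonal implicit models of stable positive systems\<close>

lemma schur_stable_imp_column_sums_decay:
  fixes A :: "real^'n^'n"
  assumes "schur_stable A"
  obtains \<alpha> N where "0 < \<alpha>" "\<alpha> < 1" "0 < N" "\<And>j. (1 v* matpow A N) $ j \<le> \<alpha> ^ N"
proof -
  obtain \<beta> c where \<beta>: "0 < \<beta>" "\<beta> < 1" and c: "\<And>k i j. \<bar>matpow A k $ i $ j\<bar> \<le> c * \<beta> ^ k"
    using schur_stable_imp_matpow_decay[OF assms] by blast
  define \<alpha> where "\<alpha> = (1 + \<beta>) / 2"
  have \<alpha>: "0 < \<alpha>" "\<alpha> < 1" "\<beta> < \<alpha>"
    using \<beta> by (simp_all add: \<alpha>_def)
  define C where "C = real CARD('n) * \<bar>c\<bar>"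
  have "(\<lambda>k. C * (\<beta> / \<alpha>) ^ k) \<longlonglongrightarrow> 0"
    using \<alpha> \<beta> by (intro tendsto_mult_right_zero LIMSEQ_power_zero) simp
  then have "eventually (\<lambda>k. C * (\<beta> / \<alpha>) ^ k < 1) sequentially"
    by (rule order_tendstoD) simp
  then obtain N where N: "0 < N" "C * (\<beta> / \<alpha>) ^ N \<le> 1"
    by (metis (no_types, lifting) eventually_at_top_linorder less_le_not_le le_add2 add_gr_0
        less_numeral_extra(1) nless_le)
  have "(1 v* matpow A N) $ j \<le> \<alpha> ^ N" for j
  proof -
    have entry_bound: "matpow A N $ i $ j \<le> \<bar>c\<bar> * \<beta> ^ N" for i
    proof -
      have "c * \<beta> ^ N \<le> \<bar>c\<bar> * \<beta> ^ N"
        using \<beta> by (intro mult_right_mono) auto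
      then show ?thesis using c[of N i j] by linarith
    qed
    have "(1 v* matpow A N) $ j \<le> (\<Sum>i\<in>(UNIV :: 'n set). \<bar>c\<bar> * \<beta> ^ N)"
      unfolding one_vector_matrix_mult_index by (intro sum_mono entry_bound)
    also have "\<dots> = C * (\<beta> / \<alpha>) ^ N * \<alpha> ^ N"
      using \<alpha> by (simp add: C_def power_divide)
    also have "\<dots> \<le> \<alpha> ^ N"
      using N(2) \<alpha> by (simp add: mult_left_le_one_le)
    finally show ?thesis .
  qed
  with \<alpha> N show ?thesis by (intro that)
qed

lemma sum_vector_matrix_mult: "(\<Sum>k\<in>S. u k) v* A = (\<Sum>k\<in>S. u k v* (A :: real^'m^'n))"
proof -
  have "(\<Sum>i\<in>UNIV. (\<Sum>k\<in>S. u k $ i) * A $ i $ j) = (\<Sum>k\<in>S. \<Sum>i\<in>UNIV. u k $ i * A $ i $ j)" for j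
    by (simp add: sum_distrib_right) (rule sum.swap)
  then show ?thesis
    by (simp add: vector_matrix_mult_def Finite_Cartesian_Product.vec_eq_iff)
qed

text \<open>The truncated Neumann series \<open>d = \<Sum>k<N. 1 v* (A / \<alpha>)\<^sup>k\<close> telescopes under
  right multiplication by \<open>A\<close>; the decay of the tail term \<open>1 v* (A / \<alpha>)\<^sup>N\<close> closes the estimate.\<close>

lemma copositive_lyapunov_vector:
  fixes A :: "real^'n^'n"
  assumes A: "nonneg_mat A" and \<alpha>: "0 < \<alpha>" and N: "0 < N"
    and decay: "\<And>j. (1 v* matpow A N) $ j \<le> \<alpha> ^ N"
  obtains d :: "real^'n" where "\<And>j. 1 \<le> d $ j" "\<And>j. (d v* A) $ j \<le> \<alpha> * d $ j"
proof -
  define u where "u k = (1 / \<alpha>) ^ k *\<^sub>R (1 v* matpow A k)" for k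
  define d where "d = (\<Sum>k<N. u k)"
  have u_nonneg: "0 \<le> u k $ j" for k j
    using nonneg_matpow[OF A, of k] \<alpha>
    by (simp add: u_def one_vector_matrix_mult_index nonneg_mat_def sum_nonneg)
  have u0: "u 0 = 1"
    by (simp add: u_def)
  have uN: "u N $ j \<le> 1" for j
    using decay[of j] \<alpha> by (simp add: u_def power_one_over field_simps)
  have uA: "u k v* A = \<alpha> *\<^sub>R u (Suc k)" for k
    using \<alpha> by (simp add: u_def scaleR_vector_matrix_assoc vector_matrix_mul_assoc)
  have "d v* A = \<alpha> *\<^sub>R (\<Sum>k<N. u (Suc k))"
    by (simp add: d_def sum_vector_matrix_mult uA scaleR_sum_right)
  also have "(\<Sum>k<N. u (Suc k)) = d - u 0 + u N"
    unfolding d_def using sum.lessThan_Suc_shift[of u N] sum.lessThan_Suc[of u N]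
    by (simp add: algebra_simps)
  finally have "(d v* A) $ j = \<alpha> * (d $ j - 1 + u N $ j)" for j
    by (simp add: u0)
  then have "(d v* A) $ j \<le> \<alpha> * d $ j" for j
    using uN[of j] \<alpha> by (simp add: mult_left_mono)
  moreover have "1 \<le> d $ j" for j
  proof -
    obtain M where M: "N = Suc M" using N gr0_conv_Suc by blast
    have "d $ j = (\<Sum>k<Suc M. u k $ j)"
      by (simp add: d_def M del: sum.lessThan_Suc)
    also have "\<dots> = 1 + (\<Sum>k<M. u (Suc k) $ j)"
      by (subst sum.lessThan_Suc_shift) (simp add: u0)
    finally show ?thesis using u_nonneg by (simp add: sum_nonneg)
  qed
  ultimately show ?thesis by (intro that)
qed

definition diag_mat :: "real^'n \<Rightarrow> real^'n^'n" where
  "diag_mat d = (\<chi> i j. if i = j then d $ i else 0)"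

lemma diag_mat_mult_index: "(diag_mat d ** X) $ i $ j = d $ i * X $ i $ j"
proof -
  have "(\<Sum>k\<in>UNIV. (if i = k then d $ i else 0) * X $ k $ j)
      = (\<Sum>k\<in>UNIV. if i = k then d $ i * X $ i $ j else 0)"
    by (rule sum.cong) auto
  then show ?thesis
    by (simp add: diag_mat_def matrix_matrix_mult_def)
qed

lemma invertible_diag_mat:
  assumes "\<And>i. d $ i \<noteq> 0"
  shows "invertible (diag_mat d)"
proof -
  have "(diag_mat (\<chi> i. 1 / d $ i) ** diag_mat d) $ i $ j = Finite_Cartesian_Product.mat 1 $ i $ j"
    for i j
    using assms by (simp add: diag_mat_mult_index) (simp add: diag_mat_def Finite_Cartesian_Product.mat_def)
  then have "diag_mat (\<chi> i. 1 / d $ i) ** diag_mat d = Finite_Cartesian_Product.mat 1"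
    by (simp add: Finite_Cartesian_Product.vec_eq_iff)
  then show ?thesis
    using invertible_left_inverse by blast
qed

lemma pos_def_diag_mat:
  fixes d :: "real^'n"
  assumes "\<And>i. 0 < d $ i"
  shows "pos_def (diag_mat d)"
  unfolding pos_def_def
proof (intro allI impI)
  fix x :: "real^'n"
  assume "x \<noteq> 0"
  then obtain i where "x $ i \<noteq> 0"
    by (auto simp: Finite_Cartesian_Product.vec_eq_iff)
  have "(\<Sum>j\<in>UNIV. (if k = j then d $ k else 0) * x $ j) = (\<Sum>j\<in>UNIV. if k = j then d $ k * x $ k else 0)"
    for k by (rule sum.cong) auto
  then have "diag_mat d *v x = d * x"
    by (simp add: diag_mat_def matrix_vector_mult_def Finite_Cartesian_Product.vec_eq_iff)
  then have "x \<bullet> (diag_mat d *v x) = (\<Sum>j\<in>UNIV. d $ j * (x $ j)\<^sup>2)"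
    by (simp add: inner_vec_def power2_eq_square mult_ac)
  also have "\<dots> > 0"
    using assms \<open>x $ i \<noteq> 0\<close>
    by (intro sum_pos2[of UNIV i]) (simp_all add: less_imp_le)
  finally show "0 < x \<bullet> (diag_mat d *v x)" .
qed

lemma M_matrix_diag_mat:
  fixes d :: "real^'n"
  assumes "\<And>i. 0 < d $ i"
  shows "M_matrix (diag_mat d)"
  unfolding M_matrix_def
proof (intro conjI allI impI)
  fix i j :: 'n
  assume "i \<noteq> j"
  then show "diag_mat d $ i $ j \<le> 0" by (simp add: diag_mat_def)
next
  fix ev
  assume "is_eigenvalue (diag_mat d) ev"
  then obtain v where v: "v \<noteq> 0" "cmat (diag_mat d) *v v = ev *s v"
    unfolding is_eigenvalue_def by blast
  then obtain i where vi: "v $ i \<noteq> 0"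
    by (auto simp: Finite_Cartesian_Product.vec_eq_iff)
  have "(\<Sum>j\<in>UNIV. complex_of_real (if i = j then d $ i else 0) * v $ j)
      = (\<Sum>j\<in>UNIV. if i = j then complex_of_real (d $ i) * v $ i else 0)"
    by (rule sum.cong) auto
  then have "(cmat (diag_mat d) *v v) $ i = complex_of_real (d $ i) * v $ i"
    by (simp add: diag_mat_def matrix_vector_mult_def)
  then have "ev = complex_of_real (d $ i)"
    using v(2) vi by simp
  then show "0 < Re ev" using assms by simp
qed

lemma diag_mat_symmetric_part:
  "diag_mat d + transpose (diag_mat d) - c *\<^sub>R Finite_Cartesian_Product.mat 1 = diag_mat (\<chi> i. 2 * d $ i - c)"
  by (simp add: diag_mat_def transpose_def Finite_Cartesian_Product.mat_def
      Finite_Cartesian_Product.vec_eq_iff)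

lemma implicit_conds_diag_mat:
  fixes A :: "real^'n^'n" and B :: "real^'m^'n"
  assumes A: "nonneg_mat A" and B: "nonneg_mat B" and \<alpha>: "0 < \<alpha>" "\<alpha> < 1"
    and d: "\<And>j. 1 \<le> d $ j" and dA: "\<And>j. (d v* A) $ j \<le> \<alpha> * d $ j"
  shows "implicit_conds (diag_mat d) (diag_mat d ** A) (diag_mat d ** B) 1 \<alpha>"
proof -
  have d_pos: "0 < d $ i" for i
    using d[of i] by simp
  have "0 < 2 * d $ i - 1" for i
    using d[of i] by simp
  then have "pos_def (diag_mat d + transpose (diag_mat d) - 1 *\<^sub>R Finite_Cartesian_Product.mat 1)"
    unfolding diag_mat_symmetric_part by (intro pos_def_diag_mat) simp
  moreover have "nonneg_mat (diag_mat d)"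
    using d_pos by (simp add: diag_mat_def nonneg_mat_def less_imp_le)
  moreover have "0 \<le> (\<Sum>i\<in>UNIV. \<alpha> * diag_mat d $ i $ j - (diag_mat d ** A) $ i $ j)" for j
  proof -
    have "(\<Sum>i\<in>UNIV. \<alpha> * diag_mat d $ i $ j - (diag_mat d ** A) $ i $ j) = \<alpha> * d $ j - (d v* A) $ j"
      by (simp add: diag_mat_mult_index sum_subtractf vector_matrix_mult_def)
         (simp add: diag_mat_def if_distrib cong: if_cong)
    then show ?thesis using dA[of j] by simp
  qed
  ultimately show ?thesis
    using \<alpha> A B M_matrix_diag_mat[OF d_pos]
    by (simp add: implicit_conds_def nonneg_mat_mult)
qed

lemma stable_positive_system_implicit_model:
  fixes A :: "real^'n^'n" and B :: "real^'m^'n"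
  assumes A: "nonneg_mat A" and stable: "schur_stable A" and B: "nonneg_mat B"
  shows "\<exists>(E::real^'n^'n) (F::real^'n^'n) (K::real^'m^'n) eps alpha.
           (\<forall>i j. i \<noteq> j \<longrightarrow> E $ i $ j = 0) \<and> (\<forall>i. E $ i $ i > 0) \<and>
           implicit_conds E F K eps alpha \<and> matrix_inv E ** F = A \<and> matrix_inv E ** K = B"
proof -
  obtain \<alpha> N where \<alpha>: "0 < \<alpha>" "\<alpha> < 1" and N: "0 < N"
    and decay: "\<And>j. (1 v* matpow A N) $ j \<le> \<alpha> ^ N"
    using schur_stable_imp_column_sums_decay[OF stable] by blast
  obtain d where d: "\<And>j. 1 \<le> d $ j" and dA: "\<And>j. (d v* A) $ j \<le> \<alpha> * d $ j"
    using copositive_lyapunov_vector[OF A \<alpha>(1) N decay] by blast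
  define E where "E = diag_mat d"
  have d_pos: "0 < d $ i" for i
    using d[of i] by simp
  have "invertible E"
    unfolding E_def by (rule invertible_diag_mat) (metis d_pos less_irrefl)
  then have inv_cancel: "matrix_inv E ** (E ** X) = X" for X :: "real^'k^'n"
    by (simp add: matrix_mul_assoc matrix_inv_left_right(2))
  have "implicit_conds E (E ** A) (E ** B) 1 \<alpha>"
    unfolding E_def using A B \<alpha> d dA by (rule implicit_conds_diag_mat)
  moreover have "\<forall>i j. i \<noteq> j \<longrightarrow> E $ i $ j = 0" "\<forall>i. E $ i $ i > 0"
    using d_pos by (simp_all add: E_def diag_mat_def)
  ultimately show ?thesis
    by (intro exI[of _ E] exI[of _ "E ** A"] exI[of _ "E ** B"] exI[of _ 1] exI[of _ \<alpha>])
       (simp add: inv_cancel)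
qed

theorem theorem2:
  shows "(\<forall>(E::real^'n^'n) (F::real^'n^'n) (K::real^'m^'n) eps alpha.
            implicit_conds E F K eps alpha \<longrightarrow>
              invertible E \<and>
              positive_system (matrix_inv E ** F) (matrix_inv E ** K) \<and>
              schur_stable (matrix_inv E ** F))
       \<and> (\<forall>(A::real^'n^'n) (B::real^'m^'n).
            nonneg_mat A \<and> schur_stable A \<and> nonneg_mat B \<longrightarrow>
              (\<exists>(E::real^'n^'n) (F::real^'n^'n) (K::real^'m^'n) eps alpha.
                 (\<forall>i j. i \<noteq> j \<longrightarrow> E $ i $ j = 0) \<and> (\<forall>i. E $ i $ i > 0) \<and>
                 implicit_conds E F K eps alpha \<and>
                 matrix_inv E ** F = A \<and> matrix_inv E ** K = B))"
  using implicit_model_stable_positive stable_positive_system_implicit_model by blast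

end
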